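(* Let $Q\in S^2_0(\mathbb R^4)$ and $a,b\in\mathbb R$, and define \[R=-(Q^3)_0+\tfrac{a-b}{2}(Q^2)_0+\big(ab+\tfrac12\operatorname{tr}(Q^2)\big)Q,\qquad 4r=\det Q+\tfrac{a-b}{6}\operatorname{tr}(Q^3)+\tfrac{ab}{2}\operatorname{tr}(Q^2)+(ab)^2.\] If $R=0$, then $r\geqslant0$.
   Context: $S^2_0(\mathbb R^4)$ is the space of real symmetric trace-free $4\times4$ matrices; $X_0=X-\frac14(\operatorname{tr}X)I$ denotes the trace-free part. *)

theory Defs
  imports "HOL-Analysis.Analysis"
begin

definition tfpart :: "real^4^4 \<Rightarrow> real^4^4" where
  "tfpart X = X - (trace X / 4) *\<^sub>R mat 1"

end

theory Submission
  imports Defs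
begin

(* Let t2 = tr(Q^2), t3 = tr(Q^3), d = det Q, s = (a-b)/2 and m = ab, so that
   4r = d + s t3/3 + m t2/2 + m^2.  Since R is linear in the trace-free parts, R = 0 says
   that Q satisfies the cubic  Q^3 = s Q^2 + (m + t2/2) Q + c I  (c fixed by the trace).
   Multiplying by Q and comparing with the Cayley-Hamilton identity of a trace-free 4x4
   matrix,  Q^4 = (t2/2) Q^2 + (t3/3) Q - d I,  gives a quadratic relation
   (s^2 + m) Q^2 + beta Q + gamma I = 0.  Because I and a nonzero trace-free Q are linearly
   independent, either s^2 + m = beta = gamma = 0, which forces 4r = 0, or Q satisfies
   Q^2 = alpha Q + tau I; reducing the cubic and Cayley-Hamilton modulo this quadratic and
   comparing coefficients expresses m, d, t2, t3 through alpha, tau, s and yields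
   alpha (3 alpha^2 - 4 tau) = 0, whence 4r = 0 or 4r = (alpha (alpha/2 - s))^2.
   The file first collects linear-algebra facts on matrices, then the Cayley-Hamilton
   identity, then the two cases, and finally the theorem. *)

lemma matrix_mul_add_rdistrib:
  fixes A B :: "'a::semiring_1^'n^'m" and C :: "'a^'p^'n"
  shows "(A + B) ** C = A ** C + B ** C"
  by (vector matrix_matrix_mult_def sum.distrib[symmetric] field_simps)

lemma trace_scaleR: "trace (k *\<^sub>R (A::real^'n^'n)) = k * trace A"
  by (simp add: trace_def sum_distrib_left)

lemma combination_mult_right:
  fixes Q :: "real^'n^'n"
  shows "(x *\<^sub>R (Q**Q) + y *\<^sub>R Q + z *\<^sub>R mat 1) ** Q = x *\<^sub>R (Q**Q**Q) + y *\<^sub>R (Q**Q) + z *\<^sub>R Q"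
  by (simp add: matrix_mul_add_rdistrib scalar_matrix_assoc[symmetric])

(* A nonzero trace-free matrix and the identity are linearly independent: taking traces
   isolates the coefficient of the identity. *)
lemma tracefree_coeffs_unique:
  fixes Q :: "real^'n^'n"
  assumes "trace Q = 0" and "Q \<noteq> 0"
    and eq: "u *\<^sub>R Q + v *\<^sub>R mat 1 = u' *\<^sub>R Q + v' *\<^sub>R mat 1"
  shows "u = u' \<and> v = v'"
proof -
  have "trace (u *\<^sub>R Q + v *\<^sub>R mat 1) = trace (u' *\<^sub>R Q + v' *\<^sub>R mat 1)"
    using eq by simp
  then have v: "v = v'"
    using assms(1) by (simp add: trace_add trace_scaleR trace_I)
  then have "(u - u') *\<^sub>R Q = 0"
    using eq by (simp add: algebra_simps)
  then show ?thesis
    using v assms(2) by simp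
qed

lemma cubic_relation_of_R_zero:
  fixes Q :: "real^4^4"
  assumes "- tfpart (Q ** Q ** Q) + s *\<^sub>R tfpart (Q ** Q) + k *\<^sub>R Q = 0"
  shows "Q**Q**Q = s *\<^sub>R (Q**Q) + k *\<^sub>R Q
                  + ((trace (Q**Q**Q) - s * trace (Q**Q)) / 4) *\<^sub>R mat 1"
  using assms unfolding tfpart_def
  by (simp add: algebra_simps diff_divide_distrib eq_neg_iff_add_eq_0)

lemma matrix_mult_entry_4:
  "((A::real^4^4) ** B)$i$j = A$i$1*B$1$j + A$i$2*B$2$j + A$i$3*B$3$j + A$i$4*B$4$j"
  by (simp add: matrix_matrix_mult_def sum_4)

lemma trace_4: "trace (A::real^4^4) = A$1$1 + A$2$2 + A$3$3 + A$4$4"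
  by (simp add: trace_def sum_4)

lemma det_4:
  "det (A::'a::comm_ring_1^4^4) =
    A$1$1 * A$2$2 * A$3$3 * A$4$4
    - A$1$1 * A$2$2 * A$3$4 * A$4$3
    - A$1$1 * A$2$3 * A$3$2 * A$4$4
    + A$1$1 * A$2$3 * A$3$4 * A$4$2
    + A$1$1 * A$2$4 * A$3$2 * A$4$3
    - A$1$1 * A$2$4 * A$3$3 * A$4$2
    - A$1$2 * A$2$1 * A$3$3 * A$4$4
    + A$1$2 * A$2$1 * A$3$4 * A$4$3
    + A$1$2 * A$2$3 * A$3$1 * A$4$4
    - A$1$2 * A$2$3 * A$3$4 * A$4$1
    - A$1$2 * A$2$4 * A$3$1 * A$4$3
    + A$1$2 * A$2$4 * A$3$3 * A$4$1
    + A$1$3 * A$2$1 * A$3$2 * A$4$4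
    - A$1$3 * A$2$1 * A$3$4 * A$4$2
    - A$1$3 * A$2$2 * A$3$1 * A$4$4
    + A$1$3 * A$2$2 * A$3$4 * A$4$1
    + A$1$3 * A$2$4 * A$3$1 * A$4$2
    - A$1$3 * A$2$4 * A$3$2 * A$4$1
    - A$1$4 * A$2$1 * A$3$2 * A$4$3
    + A$1$4 * A$2$1 * A$3$3 * A$4$2
    + A$1$4 * A$2$2 * A$3$1 * A$4$3
    - A$1$4 * A$2$2 * A$3$3 * A$4$1
    - A$1$4 * A$2$3 * A$3$1 * A$4$2
    + A$1$4 * A$2$3 * A$3$2 * A$4$1"
proof -
  have fin1: "finite {2::4, 3, 4}" "1 \<notin> {2::4, 3, 4}" by auto
  have fin2: "finite {3::4, 4}" "2 \<notin> {3::4, 4}" by auto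
  have fin3: "finite {4::4}" "3 \<notin> {4::4}" by auto
  show ?thesis
    unfolding det_def UNIV_4
    unfolding sum_over_permutations_insert[OF fin1]
    unfolding sum_over_permutations_insert[OF fin2]
    unfolding sum_over_permutations_insert[OF fin3]
    unfolding permutes_sing
    by (simp add: sign_swap_id permutation_swap_id permutation_compose sign_compose swap_id_eq algebra_simps)
qed

lemma cayley_hamilton_tracefree_4:
  fixes Q :: "real^4^4"
  assumes "trace Q = 0"
  shows "Q**Q**Q**Q = (trace (Q**Q) / 2) *\<^sub>R (Q**Q) + (trace (Q**Q**Q) / 3) *\<^sub>R Q
                     - det Q *\<^sub>R mat 1"
proof -
  have q44: "Q$4$4 = - (Q$1$1 + Q$2$2 + Q$3$3)"
    using assms by (simp add: trace_4)
  show ?thesis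
    unfolding vec_eq_iff forall_4
    by (simp add: matrix_mult_entry_4 trace_4 det_4 mat_def q44; algebra)
qed

(* Reducing Q^4 once via the cubic and once via Cayley-Hamilton yields a relation of
   degree two between Q^2, Q and I. *)
lemma quadratic_relation:
  fixes Q :: "real^4^4"
  assumes "trace Q = 0"
    and cubic: "Q**Q**Q = s *\<^sub>R (Q**Q) + k *\<^sub>R Q + c *\<^sub>R mat 1"
  shows "(s\<^sup>2 + k - trace (Q**Q) / 2) *\<^sub>R (Q**Q)
       + (s * k + c - trace (Q**Q**Q) / 3) *\<^sub>R Q + (s * c + det Q) *\<^sub>R mat 1 = 0"
proof -
  have "Q**Q**Q**Q = s *\<^sub>R (Q**Q**Q) + k *\<^sub>R (Q**Q) + c *\<^sub>R Q"
    using combination_mult_right[of s Q k c] cubic by simp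
  also have "\<dots> = (s\<^sup>2 + k) *\<^sub>R (Q**Q) + (s * k + c) *\<^sub>R Q + (s * c) *\<^sub>R mat 1"
    unfolding cubic by (simp add: algebra_simps power2_eq_square)
  finally show ?thesis
    unfolding cayley_hamilton_tracefree_4[OF assms(1)] by (simp add: algebra_simps)
qed

lemma powers_of_quadratic:
  fixes Q :: "real^'n^'n"
  assumes quad: "Q**Q = \<alpha> *\<^sub>R Q + \<tau> *\<^sub>R mat 1"
  shows "Q**Q**Q = (\<alpha>\<^sup>2 + \<tau>) *\<^sub>R Q + (\<alpha> * \<tau>) *\<^sub>R mat 1"
    and "Q**Q**Q**Q = (\<alpha>^3 + 2 * \<alpha> * \<tau>) *\<^sub>R Q + ((\<alpha>\<^sup>2 + \<tau>) * \<tau>) *\<^sub>R mat 1"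
proof -
  have mult_Q: "(x *\<^sub>R Q + y *\<^sub>R mat 1) ** Q = (x * \<alpha> + y) *\<^sub>R Q + (x * \<tau>) *\<^sub>R mat 1" for x y
    using combination_mult_right[of 0 Q x y] quad by (simp add: algebra_simps)
  show cube: "Q**Q**Q = (\<alpha>\<^sup>2 + \<tau>) *\<^sub>R Q + (\<alpha> * \<tau>) *\<^sub>R mat 1"
    using mult_Q[of \<alpha> \<tau>] quad by (simp add: power2_eq_square)
  show "Q**Q**Q**Q = (\<alpha>^3 + 2 * \<alpha> * \<tau>) *\<^sub>R Q + ((\<alpha>\<^sup>2 + \<tau>) * \<tau>) *\<^sub>R mat 1"
    using mult_Q[of "\<alpha>\<^sup>2 + \<tau>" "\<alpha> * \<tau>"] cube by (simp add: algebra_simps power2_eq_square power3_eq_cube)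
qed

lemma traces_of_quadratic:
  fixes Q :: "real^4^4"
  assumes "trace Q = 0" and quad: "Q**Q = \<alpha> *\<^sub>R Q + \<tau> *\<^sub>R mat 1"
  shows "trace (Q**Q) = 4 * \<tau>" and "trace (Q**Q**Q) = 4 * \<alpha> * \<tau>"
  using assms powers_of_quadratic(1)[OF quad] by (simp_all add: trace_add trace_scaleR trace_I)

(* The case where Q satisfies a quadratic: comparing coefficients in the cubic and in
   Cayley-Hamilton shows that 4r vanishes or is a perfect square. *)
lemma r_nonneg_quadratic_case:
  fixes Q :: "real^4^4"
  assumes tr: "trace Q = 0" and "Q \<noteq> 0"
    and quad: "Q**Q = \<alpha> *\<^sub>R Q + \<tau> *\<^sub>R mat 1"
    and cubic: "Q**Q**Q = s *\<^sub>R (Q**Q) + (m + trace (Q**Q) / 2) *\<^sub>R Q + c *\<^sub>R mat 1"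
  shows "0 \<le> det Q + s / 3 * trace (Q**Q**Q) + m / 2 * trace (Q**Q) + m\<^sup>2"
proof -
  note t2 = traces_of_quadratic(1)[OF tr quad] and t3 = traces_of_quadratic(2)[OF tr quad]
  have "(\<alpha>\<^sup>2 + \<tau>) *\<^sub>R Q + (\<alpha> * \<tau>) *\<^sub>R mat 1 = Q**Q**Q"
    by (rule powers_of_quadratic(1)[OF quad, symmetric])
  also have "\<dots> = s *\<^sub>R (Q**Q) + (m + 2 * \<tau>) *\<^sub>R Q + c *\<^sub>R mat 1"
    using cubic by (simp add: t2)
  also have "\<dots> = (s * \<alpha> + m + 2 * \<tau>) *\<^sub>R Q + (s * \<tau> + c) *\<^sub>R mat 1"
    unfolding quad by (simp add: algebra_simps)
  finally have "(\<alpha>\<^sup>2 + \<tau>) *\<^sub>R Q + (\<alpha> * \<tau>) *\<^sub>R mat 1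
      = (s * \<alpha> + m + 2 * \<tau>) *\<^sub>R Q + (s * \<tau> + c) *\<^sub>R mat 1" .
  from tracefree_coeffs_unique[OF tr \<open>Q \<noteq> 0\<close> this]
  have m: "m = \<alpha>\<^sup>2 - s * \<alpha> - \<tau>"
    by simp
  have "(\<alpha>^3 + 2 * \<alpha> * \<tau>) *\<^sub>R Q + ((\<alpha>\<^sup>2 + \<tau>) * \<tau>) *\<^sub>R mat 1 = Q**Q**Q**Q"
    by (rule powers_of_quadratic(2)[OF quad, symmetric])
  also have "\<dots> = (2 * \<tau>) *\<^sub>R (Q**Q) + (4 * \<alpha> * \<tau> / 3) *\<^sub>R Q - det Q *\<^sub>R mat 1"
    unfolding cayley_hamilton_tracefree_4[OF tr] t2 t3 by simp
  also have "\<dots> = (2 * \<alpha> * \<tau> + 4 * \<alpha> * \<tau> / 3) *\<^sub>R Q + (2 * \<tau>\<^sup>2 - det Q) *\<^sub>R mat 1"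
    unfolding quad by (simp add: algebra_simps power2_eq_square flip: scaleR_add_left)
  finally have "(\<alpha>^3 + 2 * \<alpha> * \<tau>) *\<^sub>R Q + ((\<alpha>\<^sup>2 + \<tau>) * \<tau>) *\<^sub>R mat 1
      = (2 * \<alpha> * \<tau> + 4 * \<alpha> * \<tau> / 3) *\<^sub>R Q + (2 * \<tau>\<^sup>2 - det Q) *\<^sub>R mat 1" .
  from tracefree_coeffs_unique[OF tr \<open>Q \<noteq> 0\<close> this]
  have "\<alpha>^3 = 4 * \<alpha> * \<tau> / 3" and d: "det Q = \<tau>\<^sup>2 - \<alpha>\<^sup>2 * \<tau>"
    by (simp_all add: algebra_simps power2_eq_square)
  then have "\<alpha> = 0 \<or> \<tau> = 3 / 4 * \<alpha>\<^sup>2"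
    by (auto simp: power2_eq_square power3_eq_cube)
  then show ?thesis
  proof
    assume "\<alpha> = 0"
    then have "det Q + s / 3 * trace (Q**Q**Q) + m / 2 * trace (Q**Q) + m\<^sup>2 = 0"
      unfolding d m t2 t3 by (simp add: power2_eq_square algebra_simps)
    then show ?thesis by simp
  next
    assume \<tau>: "\<tau> = 3 / 4 * \<alpha>\<^sup>2"
    have "det Q + s / 3 * trace (Q**Q**Q) + m / 2 * trace (Q**Q) + m\<^sup>2 = (\<alpha> * (\<alpha> / 2 - s))\<^sup>2"
      unfolding d m t2 t3 \<tau> by (simp add: power2_eq_square field_simps)
    then show ?thesis by simp
  qed
qed

(* The theorem for any trace-free Q satisfying the cubic: either Q = 0 (then 4r = m^2),
   or the quadratic relation degenerates (then 4r = 0), or Q satisfies a genuine quadratic. *)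
lemma r_nonneg_of_cubic:
  fixes Q :: "real^4^4"
  assumes tr: "trace Q = 0"
    and cubic: "Q**Q**Q = s *\<^sub>R (Q**Q) + (m + trace (Q**Q) / 2) *\<^sub>R Q
                         + ((trace (Q**Q**Q) - s * trace (Q**Q)) / 4) *\<^sub>R mat 1"
  shows "0 \<le> det Q + s / 3 * trace (Q**Q**Q) + m / 2 * trace (Q**Q) + m\<^sup>2"
proof (cases "Q = 0")
  case True
  then show ?thesis
    by (simp add: det_0[unfolded mat_0] trace_0[unfolded mat_0])
next
  case False
  define t2 t3 where "t2 = trace (Q**Q)" and "t3 = trace (Q**Q**Q)"
  define \<beta> where "\<beta> = s * (m + t2 / 2) + (t3 - s * t2) / 4 - t3 / 3"
  define \<gamma> where "\<gamma> = s * ((t3 - s * t2) / 4) + det Q"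
  have rel: "(s\<^sup>2 + m) *\<^sub>R (Q**Q) + \<beta> *\<^sub>R Q + \<gamma> *\<^sub>R mat 1 = 0"
    using quadratic_relation[OF tr cubic] by (simp add: \<beta>_def \<gamma>_def t2_def t3_def)
  show ?thesis
  proof (cases "s\<^sup>2 + m = 0")
    case True
    then have "\<beta> *\<^sub>R Q + \<gamma> *\<^sub>R mat 1 = 0 *\<^sub>R Q + 0 *\<^sub>R mat 1"
      using rel by simp
    from tracefree_coeffs_unique[OF tr False this] have "\<beta> = 0" and "\<gamma> = 0"
      by simp_all
    moreover have m: "m = - s\<^sup>2"
      using True by simp
    ultimately have t3: "t3 = 3 * s * t2 - 12 * s^3" and d: "det Q = - s * (t3 - s * t2) / 4"
      unfolding \<beta>_def \<gamma>_def m by (simp_all add: field_simps power2_eq_square power3_eq_cube)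
    have "det Q + s / 3 * t3 + m / 2 * t2 + m\<^sup>2 = 0"
      unfolding d unfolding t3 m by (simp add: field_simps power2_eq_square power3_eq_cube)
    then show ?thesis
      by (simp add: t2_def t3_def)
  next
    case nondeg: False
    have "(1 / (s\<^sup>2 + m)) *\<^sub>R ((s\<^sup>2 + m) *\<^sub>R (Q**Q) + \<beta> *\<^sub>R Q + \<gamma> *\<^sub>R mat 1) = 0"
      using rel by simp
    then have "Q**Q + (\<beta> / (s\<^sup>2 + m)) *\<^sub>R Q + (\<gamma> / (s\<^sup>2 + m)) *\<^sub>R mat 1 = 0"
      using nondeg by (simp add: scaleR_add_right)
    then have "Q**Q = (- \<beta> / (s\<^sup>2 + m)) *\<^sub>R Q + (- \<gamma> / (s\<^sup>2 + m)) *\<^sub>R mat 1"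
      by (simp add: eq_neg_iff_add_eq_0[symmetric] add.assoc)
    from r_nonneg_quadratic_case[OF tr False this cubic] show ?thesis .
  qed
qed

theorem mainTheorem6:
  fixes Q :: "real^4^4" and a b :: real
  assumes sym: "transpose Q = Q"
    and trfree: "trace Q = 0"
    and R0: "- tfpart (Q ** Q ** Q) + ((a - b) / 2) *\<^sub>R tfpart (Q ** Q)
             + (a * b + trace (Q ** Q) / 2) *\<^sub>R Q = 0"
  shows "(det Q + (a - b) / 6 * trace (Q ** Q ** Q) + a * b / 2 * trace (Q ** Q)
          + (a * b)^2) / 4 \<ge> 0"
proof -
  have "0 \<le> det Q + (a - b) / 2 / 3 * trace (Q**Q**Q) + a * b / 2 * trace (Q**Q) + (a * b)\<^sup>2"
    using r_nonneg_of_cubic[OF trfree cubic_relation_of_R_zero[OF R0]] by simp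
  then show ?thesis
    by simp
qed

end
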